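(* Let $n,k$ be positive integers such that $s^{n,k}=\frac{n(n+1)}{2k}$ is an integer, let $l<k$, and let $p_1\le p_2\le\cdots\le p_l$ be positive integers (an incomplete ascending partition $P=[p_1,\ldots,p_l]$) satisfying: (i) $n-\sum_{i=1}^l p_i\ge (k-l)p_l$; and (ii) $\mathrm{slack}_j(P)=\sum_{i=1}^{p_1+\cdots+p_j}(n-i+1)-j\,s^{n,k}\ge 0$ for all $j\le l$. Then there exist integers $p_{l+1},\ldots,p_k$ such that $\mathcal P=[p_1,\ldots,p_k]\in AP_{n,k}$ and $\mathrm{slack}(\mathcal P)\ge 0$.
   Context: An ascending partition of $n$ of size $k$ is a sequence of positive integers $[p_1,\ldots,p_k]$ with $p_1\le\cdots\le p_k$ and $\sum_i p_i=n$; $AP_{n,k}$ is the set of all such partitions when $s^{n,k}$ is an integer. For $\mathcal P\in AP_{n,k}$ and $j=1,\ldots,k$, $\mathrm{slack}_j(\mathcal P)=\sum_{i=1}^{p_1+\cdots+p_j}(n-i+1)-j\,s^{n,k}$, and $\mathrm{slack}(\mathcal P)=\min_{1\le j\le k-1}\mathrm{slack}_j(\mathcal P)$. *)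

theory Defs
  imports Main
begin

text \<open>s^{n,k} = n(n+1)/(2k); used only when 2k divides n(n+1).\<close>
definition s_nk :: "nat \<Rightarrow> nat \<Rightarrow> nat" where
  "s_nk n k = n * (n + 1) div (2 * k)"

definition AP :: "nat \<Rightarrow> nat \<Rightarrow> nat list set" where
  "AP n k = {ps. length ps = k \<and> (\<forall>p\<in>set ps. 0 < p) \<and> sorted ps \<and> sum_list ps = n}"

definition slack_j :: "nat \<Rightarrow> nat \<Rightarrow> nat list \<Rightarrow> nat \<Rightarrow> int" where
  "slack_j n k ps j =
     (\<Sum>i = 1..sum_list (take j ps). int n - int i + 1) - int j * int (s_nk n k)"

end

theory Submission
  imports Defs
begin

text \<open>Complete the partition greedily: if \<open>r = k - l\<close> parts remain to be placed and
  \<open>R = n - (p\<^sub>1 + \<dots> + p\<^sub>l)\<close> is still to be distributed, append \<open>q = \<lfloor>R / r\<rfloor>\<close>.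
  Since \<open>R \<ge> r p\<^sub>l\<close> we get \<open>q \<ge> p\<^sub>l\<close>, and \<open>R - q \<ge> (r - 1) q\<close> keeps condition (i).
  Writing \<open>R = r q + t\<close> with \<open>0 \<le> t < r\<close> and using \<open>k s\<^sup>n\<^sup>,\<^sup>k = n (n + 1) / 2\<close>, one finds
  \<open>r \<cdot> slack\<^sub>l\<^sub>+\<^sub>1 = (r - 1) \<cdot> slack\<^sub>l + (r (r - 1) q\<^sup>2 - t (t + 1)) / 2\<close>, and
  \<open>t (t + 1) \<le> r (r - 1) \<le> r (r - 1) q\<^sup>2\<close>, so condition (ii) is kept as well.
  When a single part is missing, the remainder \<open>R \<ge> p\<^sub>l\<close> closes the partition.\<close>

lemma sorted_le_last:
  fixes xs :: "'a::linorder list"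
  assumes "sorted xs" and "x \<in> set xs"
  shows "x \<le> last xs"
  using assms by (induction xs) (auto simp: last_in_set)

lemma double_sum_descending:
  "2 * (\<Sum>i = 1..m. int n - int i + 1) = int m * (2 * int n - int m + 1)"
  by (induction m) (auto simp: algebra_simps)

lemma double_slack_j:
  "2 * slack_j n k ps j =
     int (sum_list (take j ps)) * (2 * int n - int (sum_list (take j ps)) + 1)
     - 2 * int j * int (s_nk n k)"
  unfolding slack_j_def
  using double_sum_descending[where m = "sum_list (take j ps)" and n = n] by (simp add: algebra_simps)

lemma slack_j_append: "j \<le> length ps \<Longrightarrow> slack_j n k (ps @ qs) j = slack_j n k ps j"
  by (simp add: slack_j_def)

lemma slack_nonneg_after_quotient_step:
  fixes a q r t L s n :: int
  assumes n: "n = a + r * q + t" and s: "2 * (L + r) * s = n * (n + 1)"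
    and t: "0 \<le> t" "t < r" and q: "1 \<le> q"
    and old: "2 * L * s \<le> a * (2 * n - a + 1)"
  shows "2 * (L + 1) * s \<le> (a + q) * (2 * n - (a + q) + 1)"
proof -
  have identity: "r * ((a + q) * (2 * n - (a + q) + 1) - 2 * (L + 1) * s)
      = (r - 1) * (a * (2 * n - a + 1) - 2 * L * s) + (r * (r - 1) * q\<^sup>2 - t * (t + 1))"
  proof -
    have "r * ((a + q) * (2 * n - (a + q) + 1) - 2 * (L + 1) * s)
        - ((r - 1) * (a * (2 * n - a + 1) - 2 * L * s) + (r * (r - 1) * q\<^sup>2 - t * (t + 1)))
        = n * (n + 1) - 2 * (L + r) * s"
      using n by (simp add: algebra_simps power2_eq_square)
    then show ?thesis using s by simp
  qed
  have "t * (t + 1) \<le> (r - 1) * r" using t by (intro mult_mono) auto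
  also have "\<dots> \<le> r * (r - 1) * q\<^sup>2"
    using t q mult_left_mono[of 1 "q\<^sup>2" "r * (r - 1)"] by (simp add: mult.commute)
  finally have "0 \<le> r * ((a + q) * (2 * n - (a + q) + 1) - 2 * (L + 1) * s)"
    using identity old t by simp
  then show ?thesis using t by (simp add: zero_le_mult_iff)
qed

definition admissible_prefix :: "nat \<Rightarrow> nat \<Rightarrow> nat list \<Rightarrow> bool" where
  "admissible_prefix n k ps \<longleftrightarrow>
     0 < length ps \<and> length ps < k \<and> (\<forall>p\<in>set ps. 0 < p) \<and> sorted ps \<and>
     sum_list ps + (k - length ps) * last ps \<le> n \<and>
     (\<forall>j. 1 \<le> j \<and> j \<le> length ps \<longrightarrow> 0 \<le> slack_j n k ps j)"

lemma admissible_prefix_append_quotient: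
  assumes sk: "2 * k * s_nk n k = n * (n + 1)"
    and adm: "admissible_prefix n k ps" and more: "Suc (length ps) < k"
  shows "admissible_prefix n k (ps @ [(n - sum_list ps) div (k - length ps)])"
proof -
  define a L r where "a = sum_list ps" and "L = length ps" and "r = k - length ps"
  define q t where "q = (n - a) div r" and "t = (n - a) mod r"
  have L: "0 < L" "L < k" and pos: "\<forall>p\<in>set ps. 0 < p" and sorted: "sorted ps"
    and room: "a + r * last ps \<le> n"
    and slack: "\<forall>j. 1 \<le> j \<and> j \<le> L \<longrightarrow> 0 \<le> slack_j n k ps j"
    using adm by (simp_all add: admissible_prefix_def a_def L_def r_def)
  have r: "1 < r" "k = L + r" using more L by (simp_all add: r_def L_def)
  have n: "n = a + r * q + t" using room unfolding q_def t_def by simp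
  have "last ps = r * last ps div r" using r by simp
  also have "\<dots> \<le> q" unfolding q_def using room by (intro div_le_mono) simp
  finally have last_le_q: "last ps \<le> q" .
  have "0 < last ps" using pos L by (simp add: L_def)
  hence q: "1 \<le> q" using last_le_q by simp
  have all_le_q: "\<forall>p\<in>set ps. p \<le> q"
    using sorted_le_last[OF sorted] last_le_q by (auto intro: order.trans)
  have new_slack: "0 \<le> slack_j n k (ps @ [q]) (Suc L)"
  proof -
    have "2 * (int L + 1) * int (s_nk n k)
        \<le> (int a + int q) * (2 * int n - (int a + int q) + 1)"
    proof (rule slack_nonneg_after_quotient_step)
      show "int n = int a + int r * int q + int t" using n by simp
      show "2 * (int L + int r) * int (s_nk n k) = int n * (int n + 1)"
        using arg_cong[OF sk, of int] r by (simp add: algebra_simps)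
      show "int t < int r" using r by (simp add: t_def)
      show "2 * int L * int (s_nk n k) \<le> int a * (2 * int n - int a + 1)"
      proof -
        have "0 \<le> 2 * slack_j n k ps L" using slack L by simp
        then show ?thesis using double_slack_j[of n k ps L] by (simp add: L_def a_def)
      qed
    qed (use q in auto)
    then show ?thesis
      using double_slack_j[of n k "ps @ [q]" "Suc L"] by (simp add: L_def a_def algebra_simps)
  qed
  have "admissible_prefix n k (ps @ [q])"
    unfolding admissible_prefix_def
  proof (intro conjI allI impI)
    have "sum_list (ps @ [q]) + (k - length (ps @ [q])) * last (ps @ [q]) = a + r * q"
      using r by (cases r) (simp_all add: a_def L_def)
    then show "sum_list (ps @ [q]) + (k - length (ps @ [q])) * last (ps @ [q]) \<le> n"
      using n by simp
    fix j assume "1 \<le> j \<and> j \<le> length (ps @ [q])"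
    then show "0 \<le> slack_j n k (ps @ [q]) j"
      using slack slack_j_append[where ps = ps and qs = "[q]"] new_slack
      by (cases "j \<le> L") (auto simp: L_def le_Suc_eq)
  qed (use more pos q sorted all_le_q in \<open>auto simp: sorted_append\<close>)
  then show ?thesis by (simp add: q_def a_def r_def)
qed

lemma admissible_prefix_append_remainder:
  assumes adm: "admissible_prefix n k ps" and last_part: "Suc (length ps) = k"
  shows "ps @ [n - sum_list ps] \<in> AP n k \<and>
    (\<forall>j. 1 \<le> j \<and> j \<le> k - 1 \<longrightarrow> 0 \<le> slack_j n k (ps @ [n - sum_list ps]) j)"
proof -
  have pos: "\<forall>p\<in>set ps. 0 < p" and sorted: "sorted ps" and ne: "ps \<noteq> []"
    and room: "sum_list ps + last ps \<le> n"
    and slack: "\<forall>j. 1 \<le> j \<and> j \<le> length ps \<longrightarrow> 0 \<le> slack_j n k ps j"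
    using adm last_part by (auto simp: admissible_prefix_def)
  have "0 < last ps" using pos ne by simp
  moreover have "\<forall>p\<in>set ps. p \<le> n - sum_list ps"
    using sorted_le_last[OF sorted] room by fastforce
  ultimately have "ps @ [n - sum_list ps] \<in> AP n k"
    using pos sorted room last_part by (auto simp: AP_def sorted_append)
  moreover have "0 \<le> slack_j n k (ps @ [n - sum_list ps]) j" if "1 \<le> j \<and> j \<le> k - 1" for j
  proof -
    have "j \<le> length ps" using that last_part by linarith
    then show ?thesis using that slack slack_j_append[where ps = ps and qs = "[n - sum_list ps]"] by simp
  qed
  ultimately show ?thesis by blast
qed

lemma admissible_prefix_completion:
  assumes sk: "2 * k * s_nk n k = n * (n + 1)" and adm: "admissible_prefix n k ps"
  shows "\<exists>qs. length qs = k - length ps \<and> ps @ qs \<in> AP n k \<and>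
           (\<forall>j. 1 \<le> j \<and> j \<le> k - 1 \<longrightarrow> 0 \<le> slack_j n k (ps @ qs) j)"
  using adm
proof (induction "k - length ps" arbitrary: ps rule: less_induct)
  case less
  show ?case
  proof (cases "Suc (length ps) = k")
    case True
    then show ?thesis
      using admissible_prefix_append_remainder[OF less.prems True] by (intro exI[of _ "[_]"]) auto
  next
    case False
    define q where "q = (n - sum_list ps) div (k - length ps)"
    have more: "Suc (length ps) < k" using less.prems False by (simp add: admissible_prefix_def)
    have adm': "admissible_prefix n k (ps @ [q])"
      using admissible_prefix_append_quotient[OF sk less.prems more] by (simp add: q_def)
    have "k - length (ps @ [q]) < k - length ps" using more by simp
    then obtain qs where "length qs = k - length (ps @ [q])" "(ps @ [q]) @ qs \<in> AP n k"
      "\<forall>j. 1 \<le> j \<and> j \<le> k - 1 \<longrightarrow> 0 \<le> slack_j n k ((ps @ [q]) @ qs) j"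
      using less.hyps adm' by blast
    then show ?thesis using more by (intro exI[of _ "q # qs"]) auto
  qed
qed

theorem mainTheorem5:
  fixes n k :: nat and ps :: "nat list"
  assumes "0 < n" and "0 < k"
    and "(2 * k) dvd (n * (n + 1))"
    and "0 < length ps" and "length ps < k"
    and "\<forall>p\<in>set ps. 0 < p" and "sorted ps"
    and "int n - int (sum_list ps) \<ge> int (k - length ps) * int (last ps)"
    and "\<forall>j. 1 \<le> j \<and> j \<le> length ps \<longrightarrow> slack_j n k ps j \<ge> 0"
  shows "\<exists>qs. length qs = k - length ps \<and> ps @ qs \<in> AP n k \<and>
           (\<forall>j. 1 \<le> j \<and> j \<le> k - 1 \<longrightarrow> slack_j n k (ps @ qs) j \<ge> 0)"
proof -
  have sk: "2 * k * s_nk n k = n * (n + 1)" using assms(3) by (simp add: s_nk_def)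
  have "int (sum_list ps + (k - length ps) * last ps) \<le> int n" using assms(8) by simp
  then have "sum_list ps + (k - length ps) * last ps \<le> n" by (simp only: of_nat_le_iff)
  then have "admissible_prefix n k ps"
    using assms(4-7,9) by (simp add: admissible_prefix_def)
  then show ?thesis using admissible_prefix_completion[OF sk] by simp
qed

end
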